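(* An oriented graph $G$ is an in-forest if and only if it is a $1$-Burling oriented graph.
   Context: Oriented graphs are finite, without loops, multiple arcs or pairs of opposite arcs. An in-tree is an oriented graph obtained from a rooted tree by orienting every edge towards the root (edge $uv$ is oriented from $u$ to $v$ iff $v$ lies on the tree path from $u$ to the root). An in-forest is an oriented forest whose connected components are in-trees (the empty graph is an in-forest). In a rooted tree $T$ with root $r$, each non-root vertex $v$ has a parent $p(v)$; children, leaves, ancestors and descendants are as usual. A branch is a sequence $v_1\dots v_k$ ($k\ge0$) with $v_i$ the parent of $v_{i+1}$; it starts at $v_1$. A Burling tree is a 4-tuple $(T,r,\ell,c)$: $T$ a rooted tree with root $r$; $\ell$ assigns to each non-leaf vertex $v$ one of its children $\ell(v)$ (the last-born of $v$); $c$ assigns to every vertex $v$ that is neither the root nor a last-born the vertex-set of a (possibly empty) branch starting at $\ell(p(v))$, and $c(v)=\emptyset$ if $v$ is the root or a last-born. The oriented graph fully derived from it has vertex-set $V(T)$ and an arc $uv$ iff $v\in c(u)$; an oriented graph is derived from the Burling tree if it is an induced subgraph of the fully derived one. An oriented graph $G$ is a $k$-Burling oriented graph if it can be derived from a Burling tree $T$ such that every branch of $T$ contains at most $k$ vertices of $G$. *)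

theory Defs
  imports Main
begin

definition oriented_graph :: "'a set \<Rightarrow> ('a \<times> 'a) set \<Rightarrow> bool" where
  "oriented_graph V A \<longleftrightarrow> finite V \<and> A \<subseteq> V \<times> V \<and> (\<forall>x. (x, x) \<notin> A)
     \<and> (\<forall>x y. (x, y) \<in> A \<longrightarrow> (y, x) \<notin> A)"

text \<open>Rooted tree on vertex set VT with root r and parent function par
(par r is irrelevant): every non-root vertex has its parent in VT, and every
vertex reaches the root by iterating the parent map.\<close>
definition rooted_tree :: "'b set \<Rightarrow> 'b \<Rightarrow> ('b \<Rightarrow> 'b) \<Rightarrow> bool" where
  "rooted_tree VT r par \<longleftrightarrow> finite VT \<and> r \<in> VT \<and> (\<forall>v \<in> VT - {r}. par v \<in> VT)
     \<and> (\<forall>v \<in> VT. \<exists>n. (par ^^ n) v = r)"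

definition in_tree :: "'a set \<Rightarrow> ('a \<times> 'a) set \<Rightarrow> bool" where
  "in_tree V A \<longleftrightarrow> (\<exists>r par. rooted_tree V r par \<and> A = {(v, par v) | v. v \<in> V - {r}})"

definition component :: "'a set \<Rightarrow> ('a \<times> 'a) set \<Rightarrow> 'a \<Rightarrow> 'a set" where
  "component V A x = {y \<in> V. (x, y) \<in> (A \<union> A\<inverse>)\<^sup>*}"

definition in_forest :: "'a set \<Rightarrow> ('a \<times> 'a) set \<Rightarrow> bool" where
  "in_forest V A \<longleftrightarrow> oriented_graph V A \<and>
     (\<forall>x \<in> V. in_tree (component V A x) (A \<inter> (component V A x \<times> component V A x)))"

definition children :: "'b set \<Rightarrow> 'b \<Rightarrow> ('b \<Rightarrow> 'b) \<Rightarrow> 'b \<Rightarrow> 'b set" where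
  "children VT r par v = {u \<in> VT - {r}. par u = v}"

definition is_branch :: "'b set \<Rightarrow> 'b \<Rightarrow> ('b \<Rightarrow> 'b) \<Rightarrow> 'b list \<Rightarrow> bool" where
  "is_branch VT r par xs \<longleftrightarrow> set xs \<subseteq> VT \<and>
     (\<forall>i. Suc i < length xs \<longrightarrow> xs ! Suc i \<noteq> r \<and> par (xs ! Suc i) = xs ! i)"

definition burling_tree ::
  "'b set \<Rightarrow> 'b \<Rightarrow> ('b \<Rightarrow> 'b) \<Rightarrow> ('b \<Rightarrow> 'b) \<Rightarrow> ('b \<Rightarrow> 'b set) \<Rightarrow> bool" where
  "burling_tree VT r par l c \<longleftrightarrow> rooted_tree VT r par
     \<and> (\<forall>v \<in> VT. children VT r par v \<noteq> {} \<longrightarrow> l v \<in> children VT r par v)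
     \<and> (\<forall>v \<in> VT. (v = r \<or> v = l (par v)) \<longrightarrow> c v = {})
     \<and> (\<forall>v \<in> VT - {r}. v \<noteq> l (par v) \<longrightarrow>
          (\<exists>xs. is_branch VT r par xs \<and> (xs \<noteq> [] \<longrightarrow> hd xs = l (par v)) \<and> c v = set xs))"

definition fully_derived_arcs :: "'b set \<Rightarrow> ('b \<Rightarrow> 'b set) \<Rightarrow> ('b \<times> 'b) set" where
  "fully_derived_arcs VT c = {(u, v). u \<in> VT \<and> v \<in> c u}"

text \<open>k-Burling oriented graph: G is (isomorphic, via the injection phi, to) an induced
subgraph of the graph fully derived from a Burling tree, whose vertices we take to be
natural numbers (every finite tree can be relabelled so), and every branch of the tree
contains at most k vertices of G.\<close>
definition k_burling :: "'a set \<Rightarrow> ('a \<times> 'a) set \<Rightarrow> nat \<Rightarrow> bool" where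
  "k_burling V A k \<longleftrightarrow> oriented_graph V A \<and>
     (\<exists>(VT :: nat set) r par l c (phi :: 'a \<Rightarrow> nat).
        burling_tree VT r par l c \<and> inj_on phi V \<and> phi ` V \<subseteq> VT \<and>
        (\<forall>x \<in> V. \<forall>y \<in> V. (x, y) \<in> A \<longleftrightarrow> (phi x, phi y) \<in> fully_derived_arcs VT c) \<and>
        (\<forall>xs. is_branch VT r par xs \<longrightarrow> card (set xs \<inter> phi ` V) \<le> k))"

end

theory Submission
  imports Defs
begin

text \<open>Both classes are exactly the oriented graphs in which every vertex has at most one
out-neighbour and there is no directed cycle. For in-forests this is the description of a
forest by its parent map: every component of a functional acyclic graph is an in-tree rooted
at its unique sink. For 1-Burling graphs, two out-neighbours of x would both lie on the single
branch c(x); and the graph fully derived from any Burling tree is acyclic, because the head of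
an arc u \<rightarrow> v lies in the subtree of the last-born sibling of u, while the subtree of a vertex
without out-arcs is closed under arcs. Conversely, a functional acyclic graph is realised by
hanging its vertices as leaves off a path, each at a height that decreases along arcs, so that
the arc out of x becomes the branch running down the path from the last-born sibling of x to
the leaf of its out-neighbour.\<close>

text \<open>\<open>(v, w) \<in> (tree_arcs VT r par)\<^sup>*\<close> says that \<open>w\<close> is \<open>v\<close> or an ancestor of \<open>v\<close>.\<close>
definition tree_arcs :: "'b set \<Rightarrow> 'b \<Rightarrow> ('b \<Rightarrow> 'b) \<Rightarrow> ('b \<times> 'b) set" where
  "tree_arcs VT r par = {(v, par v) | v. v \<in> VT - {r}}"

lemma mem_tree_arcs [simp]: "(v, w) \<in> tree_arcs VT r par \<longleftrightarrow> v \<in> VT - {r} \<and> w = par v"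
  unfolding tree_arcs_def by blast

lemma in_tree_iff_tree_arcs:
  "in_tree V A \<longleftrightarrow> (\<exists>r par. rooted_tree V r par \<and> A = tree_arcs V r par)"
  unfolding in_tree_def tree_arcs_def ..

lemma single_valued_tree_arcs: "single_valued (tree_arcs VT r par)"
  by (auto intro: single_valuedI)

lemma tree_arcs_rtrancl_par:
  assumes "(v, w) \<in> (tree_arcs VT r par)\<^sup>*" and "v \<noteq> w"
  shows "(par v, w) \<in> (tree_arcs VT r par)\<^sup>*"
  using assms by (cases rule: converse_rtranclE) auto

lemma acyclic_tree_arcs:
  assumes tree: "rooted_tree VT r par"
  shows "acyclic (tree_arcs VT r par)"
proof -
  let ?E = "tree_arcs VT r par"
  have cycle_par: "v \<noteq> r \<and> (par v, par v) \<in> ?E\<^sup>+" if "(v, v) \<in> ?E\<^sup>+" for v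
  proof -
    obtain w where "(v, w) \<in> ?E" "(w, v) \<in> ?E\<^sup>*"
      using \<open>(v, v) \<in> ?E\<^sup>+\<close> by (blast dest: tranclD)
    then show ?thesis by (auto intro: rtrancl_into_trancl1)
  qed
  show ?thesis
  proof (rule acyclicI, intro allI notI)
    fix v assume cycle: "(v, v) \<in> ?E\<^sup>+"
    \<comment> \<open>iterating \<open>par\<close> never leaves the cycle, so it never reaches the root\<close>
    have "(par ^^ n) v \<noteq> r \<and> ((par ^^ n) v, (par ^^ n) v) \<in> ?E\<^sup>+" for n
      by (induction n) (use cycle cycle_par in auto)
    moreover have "v \<in> VT"
      using cycle by (auto dest: tranclD)
    then obtain n where "(par ^^ n) v = r"
      using tree unfolding rooted_tree_def by blast
    ultimately show False by blast
  qed
qed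

lemma trancl_Restr_closed:
  assumes "x \<in> C" and closed: "\<And>y z. y \<in> C \<Longrightarrow> (y, z) \<in> A \<Longrightarrow> z \<in> C"
    and "(x, y) \<in> A\<^sup>+"
  shows "(x, y) \<in> (Restr A C)\<^sup>+"
proof -
  have "y \<in> C \<and> (x, y) \<in> (Restr A C)\<^sup>+"
    using \<open>(x, y) \<in> A\<^sup>+\<close>
    by (induction rule: trancl_induct) (use \<open>x \<in> C\<close> closed in \<open>blast intro: trancl_into_trancl\<close>)+
  then show ?thesis ..
qed

lemma component_closed:
  "A \<subseteq> V \<times> V \<Longrightarrow> y \<in> component V A x \<Longrightarrow> (y, z) \<in> A \<Longrightarrow> z \<in> component V A x"
  unfolding component_def by (auto intro: rtrancl_into_rtrancl)

lemma self_in_component: "x \<in> V \<Longrightarrow> x \<in> component V A x"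
  unfolding component_def by simp

lemma single_valued_acyclic_if_components:
  assumes AV: "A \<subseteq> V \<times> V"
    and components: "\<And>x. x \<in> V \<Longrightarrow>
      single_valued (Restr A (component V A x)) \<and> acyclic (Restr A (component V A x))"
  shows "single_valued A \<and> acyclic A"
proof
  show "single_valued A"
  proof (rule single_valuedI)
    fix x y z assume xy: "(x, y) \<in> A" and xz: "(x, z) \<in> A"
    let ?C = "component V A x"
    have "x \<in> V" using xy AV by blast
    then have "x \<in> ?C" by (rule self_in_component)
    then have "(x, y) \<in> Restr A ?C" "(x, z) \<in> Restr A ?C"
      using xy xz component_closed[OF AV] by blast+
    with components[OF \<open>x \<in> V\<close>] show "y = z"
      by (meson single_valuedD)
  qed
  show "acyclic A"
  proof (rule acyclicI, intro allI notI)
    fix x assume cycle: "(x, x) \<in> A\<^sup>+"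
    have "x \<in> V" using cycle AV by (blast dest: tranclD)
    have "(x, x) \<in> (Restr A (component V A x))\<^sup>+"
      by (rule trancl_Restr_closed[OF self_in_component[OF \<open>x \<in> V\<close>] _ cycle])
        (rule component_closed[OF AV])
    with components[OF \<open>x \<in> V\<close>] show False
      unfolding acyclic_def by blast
  qed
qed

lemma in_forest_imp_single_valued_acyclic:
  assumes forest: "in_forest V A"
  shows "single_valued A \<and> acyclic A"
proof (rule single_valued_acyclic_if_components)
  show "A \<subseteq> V \<times> V"
    using forest unfolding in_forest_def oriented_graph_def by blast
  fix x assume "x \<in> V"
  then have "in_tree (component V A x) (Restr A (component V A x))"
    using forest by (simp add: in_forest_def)
  then obtain r par where "rooted_tree (component V A x) r par"
    and "Restr A (component V A x) = tree_arcs (component V A x) r par"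
    unfolding in_tree_iff_tree_arcs by blast
  then show "single_valued (Restr A (component V A x)) \<and> acyclic (Restr A (component V A x))"
    using single_valued_tree_arcs acyclic_tree_arcs by metis
qed

definition successor :: "('a \<times> 'a) set \<Rightarrow> 'a \<Rightarrow> 'a" where
  "successor A v = (SOME w. (v, w) \<in> A)"

lemma successor_eq: "single_valued A \<Longrightarrow> (v, w) \<in> A \<Longrightarrow> successor A v = w"
  unfolding successor_def by (metis single_valuedD someI)

lemma rtrancl_funpow_successor:
  assumes "single_valued A" and "(v, w) \<in> A\<^sup>*"
  shows "\<exists>n. (successor A ^^ n) v = w"
  using assms(2)
proof (induction rule: converse_rtrancl_induct)
  case base
  show ?case by (rule exI[of _ 0]) simp
next
  case (step u v)
  then obtain n where "(successor A ^^ n) v = w" by blast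
  then have "(successor A ^^ Suc n) u = w"
    using successor_eq[OF assms(1) step.hyps(1)] by (simp add: funpow_Suc_right del: funpow.simps)
  then show ?case ..
qed

lemma sink_reachable:
  assumes "wf (A\<inverse>)"
  obtains s where "(v, s) \<in> A\<^sup>*" and "s \<notin> Domain A"
proof -
  obtain s where "s \<in> {s. (v, s) \<in> A\<^sup>*}" and "\<forall>t. (s, t) \<in> A \<longrightarrow> t \<notin> {s. (v, s) \<in> A\<^sup>*}"
    using wfE_min[OF assms, of v "{s. (v, s) \<in> A\<^sup>*}"] by auto
  then show ?thesis
    using that by (auto intro: rtrancl_into_rtrancl)
qed

lemma single_valued_connected_reaches_sink:
  assumes sv: "single_valued A" and "(a, s) \<in> A\<^sup>*" and sink: "s \<notin> Domain A"
    and "(a, b) \<in> (A \<union> A\<inverse>)\<^sup>*"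
  shows "(b, s) \<in> A\<^sup>*"
  using assms(4)
proof (induction rule: rtrancl_induct)
  case base
  show ?case by fact
next
  case (step b b')
  show ?case
  proof (cases "(b, b') \<in> A")
    case True
    with step.IH sink sv show ?thesis
      by (cases rule: converse_rtranclE) (auto dest: single_valuedD)
  next
    case False
    with step.hyps(2) step.IH show ?thesis
      by (auto intro: converse_rtrancl_into_rtrancl)
  qed
qed

lemma in_tree_Restr_if_reaches_sink:
  assumes "finite C" and sv: "single_valued A" and "r \<in> C" and sink: "r \<notin> Domain A"
    and closed: "\<And>v w. v \<in> C \<Longrightarrow> (v, w) \<in> A \<Longrightarrow> w \<in> C"
    and reach: "\<And>v. v \<in> C \<Longrightarrow> (v, r) \<in> A\<^sup>*"
  shows "in_tree C (Restr A C)"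
proof -
  let ?par = "successor A"
  have arc: "(v, ?par v) \<in> A" if "v \<in> C" "v \<noteq> r" for v
    using reach[OF that(1)] that(2) by (cases rule: converse_rtranclE) (auto simp: successor_eq[OF sv])
  have "rooted_tree C r ?par"
    unfolding rooted_tree_def
    using \<open>finite C\<close> \<open>r \<in> C\<close> arc closed rtrancl_funpow_successor[OF sv reach] by blast
  moreover have "Restr A C = tree_arcs C r ?par"
  proof
    show "Restr A C \<subseteq> tree_arcs C r ?par"
    proof clarify
      fix v w assume "(v, w) \<in> A" "v \<in> C" "w \<in> C"
      then show "(v, w) \<in> tree_arcs C r ?par"
        using sink successor_eq[OF sv] by auto
    qed
    show "tree_arcs C r ?par \<subseteq> Restr A C"
      using arc closed by auto
  qed
  ultimately show ?thesis
    unfolding in_tree_iff_tree_arcs by blast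
qed

lemma component_in_tree:
  assumes AV: "A \<subseteq> V \<times> V" and "finite V" and sv: "single_valued A" and "acyclic A"
    and "x \<in> V"
  shows "in_tree (component V A x) (Restr A (component V A x))"
proof -
  have "finite A"
    using AV \<open>finite V\<close> finite_subset by blast
  then have "wf (A\<inverse>)"
    using \<open>acyclic A\<close> by (rule finite_acyclic_wf_converse)
  then obtain r where xr: "(x, r) \<in> A\<^sup>*" and sink: "r \<notin> Domain A"
    by (rule sink_reachable)
  show ?thesis
  proof (rule in_tree_Restr_if_reaches_sink[OF _ sv _ sink])
    show "finite (component V A x)"
      using \<open>finite V\<close> unfolding component_def by simp
    have "r \<in> V"
      using xr \<open>x \<in> V\<close> AV by (auto elim: rtranclE)
    then show "r \<in> component V A x"
      using xr unfolding component_def by (auto intro: rtrancl_mono[THEN subsetD])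
    show "(v, r) \<in> A\<^sup>*" if "v \<in> component V A x" for v
      using that single_valued_connected_reaches_sink[OF sv xr sink] unfolding component_def by blast
  qed (rule component_closed[OF AV])
qed

lemma in_forest_iff_single_valued_acyclic:
  assumes "oriented_graph V A"
  shows "in_forest V A \<longleftrightarrow> single_valued A \<and> acyclic A"
proof
  assume "single_valued A \<and> acyclic A"
  moreover have "A \<subseteq> V \<times> V" "finite V"
    using assms unfolding oriented_graph_def by blast+
  ultimately show "in_forest V A"
    using assms by (simp add: in_forest_def component_in_tree)
qed (rule in_forest_imp_single_valued_acyclic)

lemma branch_rtrancl_hd:
  assumes "is_branch VT r par xs" and "i < length xs"
  shows "(xs ! i, xs ! 0) \<in> (tree_arcs VT r par)\<^sup>*"
  using assms(2)
proof (induction i)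
  case (Suc i)
  then have "(xs ! Suc i, xs ! i) \<in> tree_arcs VT r par"
    using assms(1) nth_mem unfolding is_branch_def by fastforce
  with Suc show ?case by (meson Suc_lessD converse_rtrancl_into_rtrancl)
qed simp

lemma burling_targets_branchE:
  assumes bt: "burling_tree VT r par l c" and "u \<in> VT" and "c u \<noteq> {}"
  obtains xs where "u \<noteq> r" and "u \<noteq> l (par u)" and "is_branch VT r par xs"
    and "xs \<noteq> []" and "hd xs = l (par u)" and "c u = set xs"
proof -
  have "u \<noteq> r" and "u \<noteq> l (par u)"
    using bt \<open>u \<in> VT\<close> \<open>c u \<noteq> {}\<close> by (auto simp: burling_tree_def)
  moreover obtain xs where "is_branch VT r par xs" "xs \<noteq> [] \<longrightarrow> hd xs = l (par u)" "c u = set xs"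
    using bt \<open>u \<in> VT\<close> calculation by (auto simp: burling_tree_def)
  ultimately show thesis
    using that \<open>c u \<noteq> {}\<close> by auto
qed

lemma burling_arc_target:
  assumes bt: "burling_tree VT r par l c" and "u \<in> VT" and "v \<in> c u"
  shows "(v, l (par u)) \<in> (tree_arcs VT r par)\<^sup>*" and "(l (par u), par u) \<in> tree_arcs VT r par"
    and "c (l (par u)) = {}" and "u \<noteq> l (par u)"
proof -
  obtain xs where "u \<noteq> r" and "u \<noteq> l (par u)" and branch: "is_branch VT r par xs"
    and "xs \<noteq> []" and "hd xs = l (par u)" and "c u = set xs"
    using burling_targets_branchE[OF bt \<open>u \<in> VT\<close>] \<open>v \<in> c u\<close> by blast
  then have "par u \<in> VT" and "u \<in> children VT r par (par u)"
    using bt \<open>u \<in> VT\<close> unfolding burling_tree_def rooted_tree_def children_def by auto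
  then have "l (par u) \<in> children VT r par (par u)"
    using bt by (auto simp: burling_tree_def)
  then show "(l (par u), par u) \<in> tree_arcs VT r par"
    unfolding children_def by simp
  then show "c (l (par u)) = {}"
    using bt by (simp add: burling_tree_def)
  obtain i where "i < length xs" "v = xs ! i"
    using \<open>v \<in> c u\<close> \<open>c u = set xs\<close> by (auto simp: in_set_conv_nth)
  with branch_rtrancl_hd[OF branch] show "(v, l (par u)) \<in> (tree_arcs VT r par)\<^sup>*"
    using \<open>xs \<noteq> []\<close> \<open>hd xs = l (par u)\<close> by (simp add: hd_conv_nth)
  show "u \<noteq> l (par u)" by fact
qed

lemma fully_derived_arcs_stay_below:
  assumes bt: "burling_tree VT r par l c" and "c w = {}"
    and "(u, v) \<in> (fully_derived_arcs VT c)\<^sup>*" and "(u, w) \<in> (tree_arcs VT r par)\<^sup>*"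
  shows "(v, w) \<in> (tree_arcs VT r par)\<^sup>*"
  using assms(3,4)
proof (induction rule: rtrancl_induct)
  case (step v v')
  then have "v \<in> VT" "v' \<in> c v" "(v, w) \<in> (tree_arcs VT r par)\<^sup>*"
    by (auto simp: fully_derived_arcs_def)
  then have "v \<noteq> w" using \<open>c w = {}\<close> by auto
  then have "(par v, w) \<in> (tree_arcs VT r par)\<^sup>*"
    by (rule tree_arcs_rtrancl_par[OF \<open>(v, w) \<in> _\<close>])
  with burling_arc_target(1,2)[OF bt \<open>v \<in> VT\<close> \<open>v' \<in> c v\<close>] show ?case
    by (meson rtrancl_into_rtrancl rtrancl_trans)
qed

lemma acyclic_fully_derived_arcs:
  assumes bt: "burling_tree VT r par l c"
  shows "acyclic (fully_derived_arcs VT c)"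
proof (rule acyclicI, intro allI notI)
  let ?E = "tree_arcs VT r par"
  fix u assume "(u, u) \<in> (fully_derived_arcs VT c)\<^sup>+"
  then obtain v where "(u, v) \<in> fully_derived_arcs VT c" "(v, u) \<in> (fully_derived_arcs VT c)\<^sup>*"
    by (meson tranclD)
  then have "u \<in> VT" "v \<in> c u" by (auto simp: fully_derived_arcs_def)
  note target = burling_arc_target[OF bt this]
  let ?L = "l (par u)"
  have "(u, ?L) \<in> ?E\<^sup>*"
    using fully_derived_arcs_stay_below[OF bt target(3) \<open>(v, u) \<in> _\<close> target(1)] .
  then have "(par u, ?L) \<in> ?E\<^sup>*"
    using target(4) by (rule tree_arcs_rtrancl_par)
  with target(2) have "(?L, ?L) \<in> ?E\<^sup>+"
    by (rule rtrancl_into_trancl2)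
  moreover have "acyclic ?E"
    using bt by (simp add: burling_tree_def acyclic_tree_arcs)
  ultimately show False
    unfolding acyclic_def by blast
qed

lemma trancl_inv_image: "(x, y) \<in> (inv_image r f)\<^sup>+ \<Longrightarrow> (f x, f y) \<in> r\<^sup>+"
  by (induction rule: trancl_induct) (auto simp: inv_image_def intro: trancl_into_trancl)

lemma acyclic_inv_image: "acyclic r \<Longrightarrow> acyclic (inv_image r f)"
  unfolding acyclic_def by (blast dest: trancl_inv_image)

lemma k_burlingE:
  assumes "k_burling V A k"
  obtains VT r par l c and phi :: "'a \<Rightarrow> nat"
  where "burling_tree VT r par l c" and "inj_on phi V" and "A \<subseteq> V \<times> V"
    and "\<And>x y. x \<in> V \<Longrightarrow> y \<in> V \<Longrightarrow> (x, y) \<in> A \<longleftrightarrow> (phi x, phi y) \<in> fully_derived_arcs VT c"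
    and "\<And>xs. is_branch VT r par xs \<Longrightarrow> card (set xs \<inter> phi ` V) \<le> k"
proof -
  have "A \<subseteq> V \<times> V"
    using assms unfolding k_burling_def oriented_graph_def by (elim conjE)
  with assms show thesis
    unfolding k_burling_def by (elim conjE exE) (rule that; blast)
qed

lemma k_burling_imp_acyclic:
  assumes "k_burling V A k"
  shows "acyclic A"
proof -
  obtain VT r par l c and phi :: "'a \<Rightarrow> nat" where bt: "burling_tree VT r par l c"
    and "A \<subseteq> V \<times> V"
    and arcs: "\<And>x y. x \<in> V \<Longrightarrow> y \<in> V \<Longrightarrow> (x, y) \<in> A \<longleftrightarrow> (phi x, phi y) \<in> fully_derived_arcs VT c"
    using assms by (rule k_burlingE) blast
  have "acyclic (inv_image (fully_derived_arcs VT c) phi)"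
    by (rule acyclic_inv_image[OF acyclic_fully_derived_arcs[OF bt]])
  moreover have "A \<subseteq> inv_image (fully_derived_arcs VT c) phi"
    using \<open>A \<subseteq> V \<times> V\<close> arcs by (auto simp: inv_image_def)
  ultimately show ?thesis
    by (rule acyclic_subset)
qed

lemma k_burling_1_imp_single_valued:
  assumes "k_burling V A 1"
  shows "single_valued A"
proof (rule single_valuedI)
  obtain VT r par l c and phi :: "'a \<Rightarrow> nat" where bt: "burling_tree VT r par l c"
    and "inj_on phi V" and AV: "A \<subseteq> V \<times> V"
    and arcs: "\<And>x y. x \<in> V \<Longrightarrow> y \<in> V \<Longrightarrow> (x, y) \<in> A \<longleftrightarrow> (phi x, phi y) \<in> fully_derived_arcs VT c"
    and branches: "\<And>xs. is_branch VT r par xs \<Longrightarrow> card (set xs \<inter> phi ` V) \<le> 1"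
    using assms by (rule k_burlingE) blast
  fix x y z assume "(x, y) \<in> A" "(x, z) \<in> A"
  then have V: "x \<in> V" "y \<in> V" "z \<in> V"
    using AV by auto
  then have targets: "phi x \<in> VT" "phi y \<in> c (phi x)" "phi z \<in> c (phi x)"
    using arcs \<open>(x, y) \<in> A\<close> \<open>(x, z) \<in> A\<close> by (auto simp: fully_derived_arcs_def)
  then obtain xs where "is_branch VT r par xs" "c (phi x) = set xs"
    using burling_targets_branchE[OF bt] by blast
  then have "card (set xs \<inter> phi ` V) \<le> 1" "phi y \<in> set xs \<inter> phi ` V" "phi z \<in> set xs \<inter> phi ` V"
    using branches targets V by auto
  then have "phi y = phi z"
    by (auto simp: card_le_Suc0_iff_eq)
  then show "y = z"
    using \<open>inj_on phi V\<close> V by (auto dest: inj_onD)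
qed

text \<open>The Burling tree lives on the natural numbers: the even numbers \<open>0, 2, \<dots>, 2R\<close> form a
path (the spine) towards the root \<open>2R\<close>, the last-born child of \<open>2(k + 1)\<close> being \<open>2k\<close>, and
every \<open>x \<in> V\<close> becomes the odd leaf \<open>emb x\<close> below \<open>2(rank x + 1)\<close>. The arc from \<open>x\<close> to \<open>y\<close>
is realised by the branch \<open>2 rank x, \<dots>, 2(rank y + 1), emb y\<close>, which starts at the last-born
sibling of \<open>emb x\<close>. Since every non-final vertex of a branch is a parent, hence even, a branch
meets at most one leaf.\<close>
locale spine_embedding =
  fixes V :: "'a set" and A :: "('a \<times> 'a) set"
    and rank :: "'a \<Rightarrow> nat" and idx :: "'a \<Rightarrow> nat" and R :: nat
  assumes oriented: "oriented_graph V A"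
    and single_valued_arcs: "single_valued A"
    and rank_decreasing: "(x, y) \<in> A \<Longrightarrow> rank y < rank x"
    and rank_bounded: "x \<in> V \<Longrightarrow> rank x < R"
    and inj_idx: "inj_on idx V"
begin

definition emb :: "'a \<Rightarrow> nat" where
  "emb x = Suc (2 * idx x)"

definition vertices :: "nat set" where
  "vertices = (\<lambda>k. 2 * k) ` {..R} \<union> emb ` V"

definition spine_root :: nat where
  "spine_root = 2 * R"

definition par :: "nat \<Rightarrow> nat" where
  "par n = (if even n then n + 2 else 2 * Suc (rank (inv_into V emb n)))"

definition last_born :: "nat \<Rightarrow> nat" where
  "last_born n = n - 2"

definition branch_to :: "'a \<Rightarrow> 'a \<Rightarrow> nat list" where
  "branch_to x y = map (\<lambda>i. 2 * (rank x - i)) [0..<rank x - rank y] @ [emb y]"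

definition targets :: "nat \<Rightarrow> nat set" where
  "targets n = (let x = inv_into V emb n in
     if n \<in> emb ` V \<and> x \<in> Domain A then set (branch_to x (successor A x)) else {})"

lemma arcs_subset: "A \<subseteq> V \<times> V"
  using oriented by (simp add: oriented_graph_def)

lemma odd_emb: "odd (emb x)"
  by (simp add: emb_def)

lemma inj_emb: "inj_on emb V"
  using inj_idx by (simp add: inj_on_def emb_def)

lemma inv_emb [simp]: "x \<in> V \<Longrightarrow> inv_into V emb (emb x) = x"
  by (rule inv_into_f_f[OF inj_emb])

lemma even_par: "even (par n)"
  by (simp add: par_def)

lemma par_spine [simp]: "par (2 * k) = 2 * Suc k"
  by (simp add: par_def)

lemma par_emb [simp]: "x \<in> V \<Longrightarrow> par (emb x) = 2 * Suc (rank x)"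
  by (simp add: par_def odd_emb)

lemma funpow_par_spine: "(par ^^ j) (2 * k) = 2 * (k + j)"
proof (induction j)
  case (Suc j)
  then show ?case using par_spine[of "k + j"] by simp
qed simp

lemma spine_in_vertices: "k \<le> R \<Longrightarrow> 2 * k \<in> vertices"
  by (simp add: vertices_def)

lemma emb_in_vertices: "x \<in> V \<Longrightarrow> emb x \<in> vertices"
  by (simp add: vertices_def)

lemma vertices_cases:
  assumes "n \<in> vertices"
  obtains k where "k \<le> R" "n = 2 * k" | x where "x \<in> V" "n = emb x"
  using assms unfolding vertices_def by auto

lemma par_in_vertices:
  assumes "n \<in> vertices" and "n \<noteq> spine_root"
  shows "par n \<in> vertices"
  using assms(1)
proof (cases rule: vertices_cases)
  case (1 k)
  then have "Suc k \<le> R"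
    using assms(2) by (auto simp: spine_root_def)
  with 1 show ?thesis
    using spine_in_vertices[of "Suc k"] by simp
next
  case (2 x)
  then show ?thesis
    using spine_in_vertices[of "Suc (rank x)"] rank_bounded[of x] by simp
qed

lemma funpow_par_reaches_root:
  assumes "n \<in> vertices"
  shows "\<exists>j. (par ^^ j) n = spine_root"
  using assms
proof (cases rule: vertices_cases)
  case (1 k)
  then show ?thesis
    using funpow_par_spine[of "R - k" k] by (auto simp: spine_root_def)
next
  case (2 x)
  then have "(par ^^ Suc (R - Suc (rank x))) n = 2 * (Suc (rank x) + (R - Suc (rank x)))"
    using funpow_par_spine[of "R - Suc (rank x)" "Suc (rank x)"]
    by (simp add: funpow_Suc_right del: funpow.simps)
  also have "\<dots> = spine_root"
    using rank_bounded[OF \<open>x \<in> V\<close>] by (simp add: spine_root_def)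
  finally show ?thesis ..
qed

lemma spine_rooted_tree: "rooted_tree vertices spine_root par"
  unfolding rooted_tree_def
proof (intro conjI ballI)
  show "finite vertices"
    using oriented by (simp add: vertices_def oriented_graph_def)
  show "spine_root \<in> vertices"
    by (simp add: spine_root_def spine_in_vertices)
qed (auto intro: par_in_vertices funpow_par_reaches_root)

lemma targets_emb:
  "x \<in> V \<Longrightarrow> targets (emb x) = (if x \<in> Domain A then set (branch_to x (successor A x)) else {})"
  by (simp add: targets_def)

lemma targets_nonempty_imp_emb: "targets n \<noteq> {} \<Longrightarrow> n \<in> emb ` V"
  by (auto simp: targets_def Let_def split: if_splits)

lemma branch_to_is_branch:
  assumes "(x, y) \<in> A"
  shows "is_branch vertices spine_root par (branch_to x y)"
    and "hd (branch_to x y) = 2 * rank x"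
proof -
  let ?m = "rank x - rank y"
  have "x \<in> V" "y \<in> V" "rank y < rank x" "rank x < R"
    using assms arcs_subset rank_decreasing rank_bounded by auto
  have len: "length (branch_to x y) = Suc ?m"
    by (simp add: branch_to_def)
  have spine: "branch_to x y ! i = 2 * (rank x - i)" if "i < ?m" for i
    using that by (simp add: branch_to_def nth_append)
  have last: "branch_to x y ! ?m = emb y"
    by (simp add: branch_to_def nth_append)
  have "set (branch_to x y) \<subseteq> vertices"
    using \<open>y \<in> V\<close> \<open>rank x < R\<close> by (auto simp: branch_to_def emb_in_vertices spine_in_vertices)
  moreover have "branch_to x y ! Suc i \<noteq> spine_root \<and> par (branch_to x y ! Suc i) = branch_to x y ! i"
    if "Suc i < length (branch_to x y)" for i
  proof (cases "Suc i < ?m")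
    case True
    then show ?thesis
      using spine[OF True] spine[of i] \<open>rank x < R\<close> par_spine[of "rank x - Suc i"]
      by (auto simp: spine_root_def Suc_diff_Suc)
  next
    case False
    with that len have "Suc i = ?m" by simp
    then show ?thesis
      using spine[of i] last \<open>y \<in> V\<close> odd_emb[of y] by (auto simp: spine_root_def)
  qed
  ultimately show "is_branch vertices spine_root par (branch_to x y)"
    unfolding is_branch_def by blast
  show "hd (branch_to x y) = 2 * rank x"
    using \<open>rank y < rank x\<close> by (simp add: branch_to_def upt_conv_Cons)
qed

lemma even_in_vertices:
  assumes "n \<in> vertices" and "even n"
  obtains k where "k \<le> R" and "n = 2 * k"
  using assms odd_emb by (cases rule: vertices_cases) auto

lemma last_born_child:
  assumes "v \<in> vertices" and "children vertices spine_root par v \<noteq> {}"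
  shows "last_born v \<in> children vertices spine_root par v"
proof -
  obtain u where "u \<in> vertices" "par u = v"
    using assms(2) by (auto simp: children_def)
  then have "even v" "v \<noteq> 0"
    using even_par[of u] by (auto simp: par_def)
  obtain k where "k \<le> R" "v = 2 * k"
    using assms(1) \<open>even v\<close> by (rule even_in_vertices)
  with \<open>v \<noteq> 0\<close> obtain j where "j < R" "v = 2 * Suc j"
    by (metis Suc_le_lessD not0_implies_Suc mult_0_right)
  then show ?thesis
    using spine_in_vertices[of j] par_spine[of j]
    by (simp add: children_def last_born_def spine_root_def)
qed

lemma spine_burling_tree: "burling_tree vertices spine_root par last_born targets"
  unfolding burling_tree_def
proof (intro conjI ballI impI)
  show "rooted_tree vertices spine_root par" by (rule spine_rooted_tree)
  show "last_born v \<in> children vertices spine_root par v"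
    if "v \<in> vertices" "children vertices spine_root par v \<noteq> {}" for v
    using that by (rule last_born_child)
  show "targets v = {}" if "v \<in> vertices" "v = spine_root \<or> v = last_born (par v)" for v
  proof (rule ccontr)
    assume "targets v \<noteq> {}"
    then have "odd v"
      using targets_nonempty_imp_emb odd_emb by blast
    moreover have "even (last_born (par v))"
      using even_par[of v] by (simp add: last_born_def)
    ultimately show False
      using that(2) by (auto simp: spine_root_def)
  qed
  show "\<exists>xs. is_branch vertices spine_root par xs \<and> (xs \<noteq> [] \<longrightarrow> hd xs = last_born (par v))
      \<and> targets v = set xs"
    if "v \<in> vertices - {spine_root}" "v \<noteq> last_born (par v)" for v
  proof (cases "targets v = {}")
    case True
    then show ?thesis
      by (intro exI[of _ "[]"]) (simp add: is_branch_def)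
  next
    case False
    then obtain x where "x \<in> V" "v = emb x" "x \<in> Domain A"
      using targets_nonempty_imp_emb targets_emb by fastforce
    moreover have "(x, successor A x) \<in> A"
      using \<open>x \<in> Domain A\<close> successor_eq[OF single_valued_arcs] by blast
    ultimately show ?thesis
      using branch_to_is_branch[of x "successor A x"] targets_emb[of x]
      by (intro exI[of _ "branch_to x (successor A x)"]) (simp add: last_born_def)
  qed
qed

lemma arc_iff_fully_derived_arc:
  assumes "x \<in> V" and "y \<in> V"
  shows "(x, y) \<in> A \<longleftrightarrow> (emb x, emb y) \<in> fully_derived_arcs vertices targets"
proof
  assume "(x, y) \<in> A"
  then have "targets (emb x) = set (branch_to x y)"
    using assms(1) targets_emb successor_eq[OF single_valued_arcs] by auto
  then show "(emb x, emb y) \<in> fully_derived_arcs vertices targets"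
    using assms(1) by (simp add: fully_derived_arcs_def emb_in_vertices branch_to_def)
next
  assume "(emb x, emb y) \<in> fully_derived_arcs vertices targets"
  then have "emb y \<in> targets (emb x)"
    by (simp add: fully_derived_arcs_def)
  then have "x \<in> Domain A" and "emb y \<in> set (branch_to x (successor A x))"
    using targets_emb[OF assms(1)] by (auto split: if_splits)
  moreover have "(x, successor A x) \<in> A"
    using \<open>x \<in> Domain A\<close> successor_eq[OF single_valued_arcs] by blast
  moreover have "emb y = emb (successor A x)"
    using calculation(2) odd_emb[of y] by (auto simp: branch_to_def)
  ultimately show "(x, y) \<in> A"
    using assms arcs_subset inj_emb by (auto dest: inj_onD)
qed

lemma branch_meets_emb_at_most_once:
  assumes "is_branch vertices spine_root par xs"
  shows "card (set xs \<inter> emb ` V) \<le> 1"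
proof -
  have "i = length xs - 1" if "i < length xs" "xs ! i \<in> emb ` V" for i
  proof (rule ccontr)
    assume "i \<noteq> length xs - 1"
    with that(1) have "par (xs ! Suc i) = xs ! i"
      using assms unfolding is_branch_def by simp
    with that(2) show False
      by (metis even_par image_iff odd_emb)
  qed
  then have "set xs \<inter> emb ` V \<subseteq> {xs ! (length xs - 1)}"
    by (auto simp: in_set_conv_nth)
  then show ?thesis
    using card_mono[of "{xs ! (length xs - 1)}"] by fastforce
qed

lemma k_burling_1: "k_burling V A 1"
  unfolding k_burling_def
  using oriented spine_burling_tree inj_emb emb_in_vertices arc_iff_fully_derived_arc
    branch_meets_emb_at_most_once
  by blast

end

lemma card_trancl_image_less:
  assumes "acyclic A" and "finite (A\<^sup>+ `` {x})" and "(x, y) \<in> A"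
  shows "card (A\<^sup>+ `` {y}) < card (A\<^sup>+ `` {x})"
proof (rule psubset_card_mono[OF assms(2)])
  have "A\<^sup>+ `` {y} \<subseteq> A\<^sup>+ `` {x}"
    using assms(3) by (auto intro: trancl_into_trancl2)
  moreover have "y \<in> A\<^sup>+ `` {x}" "y \<notin> A\<^sup>+ `` {y}"
    using assms(1,3) by (auto simp: acyclic_def)
  ultimately show "A\<^sup>+ `` {y} \<subset> A\<^sup>+ `` {x}" by blast
qed

lemma single_valued_acyclic_imp_k_burling_1:
  assumes "oriented_graph V A" and "single_valued A" and "acyclic A"
  shows "k_burling V A 1"
proof -
  have "A \<subseteq> V \<times> V" and "finite V"
    using assms(1) by (auto simp: oriented_graph_def)
  then have reach_V: "A\<^sup>+ `` {x} \<subseteq> V" for x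
    using trancl_subset_Sigma by blast
  obtain idx :: "'a \<Rightarrow> nat" where "inj_on idx V"
    using finite_imp_inj_to_nat_seg[OF \<open>finite V\<close>] by blast
  interpret spine_embedding V A "\<lambda>x. card (A\<^sup>+ `` {x})" idx "Suc (card V)"
  proof
    show "card (A\<^sup>+ `` {y}) < card (A\<^sup>+ `` {x})" if "(x, y) \<in> A" for x y
      using card_trancl_image_less[OF assms(3) _ that] reach_V \<open>finite V\<close> finite_subset by blast
    show "card (A\<^sup>+ `` {x}) < Suc (card V)" for x
      using card_mono[OF \<open>finite V\<close> reach_V[of x]] by simp
  qed (use assms \<open>inj_on idx V\<close> in auto)
  show ?thesis by (rule k_burling_1)
qed

theorem lemma4p1:
  fixes V :: "'a set" and A :: "('a \<times> 'a) set"
  assumes "oriented_graph V A"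
  shows "in_forest V A \<longleftrightarrow> k_burling V A 1"
proof -
  have "in_forest V A \<longleftrightarrow> single_valued A \<and> acyclic A"
    using assms by (rule in_forest_iff_single_valued_acyclic)
  also have "\<dots> \<longleftrightarrow> k_burling V A 1"
    using assms single_valued_acyclic_imp_k_burling_1 k_burling_1_imp_single_valued
      k_burling_imp_acyclic by blast
  finally show ?thesis .
qed

end
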